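(* Let $M$ be a centrally endo-AIP right $R$-module with $S=\mathrm{End}_R(M)$. If $\mathrm{u.dim}(S_S)=1$, then $S$ is a prime ring.
   Context: For $N\le M$, $l_S(N)=\{\phi\in S:\phi(N)=0\}$. An ideal $I$ of $S$ is centrally s-unital if for every $a\in I$ there is $z\in I$ central in $S$ with $az=a$. $M$ is centrally endo-AIP if $l_S(N)$ is a centrally s-unital ideal of $S$ for every fully invariant submodule $N$ of $M$. $\mathrm{u.dim}(S_S)=1$ means $S_S$ has uniform dimension $1$ (i.e. $S_S$ is uniform). *)

theory Defs
  imports Main
begin

definition right_module :: "('m::ab_group_add \<Rightarrow> 'r::ring_1 \<Rightarrow> 'm) \<Rightarrow> bool" where
  "right_module act \<longleftrightarrow>
     (\<forall>x y r. act (x + y) r = act x r + act y r) \<and>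
     (\<forall>x r s. act x (r + s) = act x r + act x s) \<and>
     (\<forall>x r s. act x (r * s) = act (act x r) s) \<and>
     (\<forall>x. act x 1 = x)"

text \<open>S = End_R(M): additive R-linear maps; ring with pointwise addition and
  composition as multiplication ((f g)(m) = f (g m)), acting on the left of M.\<close>
definition End_R :: "('m::ab_group_add \<Rightarrow> 'r::ring_1 \<Rightarrow> 'm) \<Rightarrow> ('m \<Rightarrow> 'm) set" where
  "End_R act = {f. (\<forall>x y. f (x + y) = f x + f y) \<and> (\<forall>x r. f (act x r) = act (f x) r)}"

definition zero_end :: "'m::ab_group_add \<Rightarrow> 'm" where
  "zero_end = (\<lambda>x. 0)"

definition add_end :: "('m::ab_group_add \<Rightarrow> 'm) \<Rightarrow> ('m \<Rightarrow> 'm) \<Rightarrow> 'm \<Rightarrow> 'm" where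
  "add_end f g = (\<lambda>x. f x + g x)"

definition neg_end :: "('m::ab_group_add \<Rightarrow> 'm) \<Rightarrow> 'm \<Rightarrow> 'm" where
  "neg_end f = (\<lambda>x. - f x)"

definition submodule :: "('m::ab_group_add \<Rightarrow> 'r::ring_1 \<Rightarrow> 'm) \<Rightarrow> 'm set \<Rightarrow> bool" where
  "submodule act N \<longleftrightarrow> 0 \<in> N \<and> (\<forall>x\<in>N. \<forall>y\<in>N. x + y \<in> N) \<and> (\<forall>x\<in>N. - x \<in> N)
      \<and> (\<forall>x\<in>N. \<forall>r. act x r \<in> N)"

definition fully_invariant :: "('m::ab_group_add \<Rightarrow> 'r::ring_1 \<Rightarrow> 'm) \<Rightarrow> 'm set \<Rightarrow> bool" where
  "fully_invariant act N \<longleftrightarrow> submodule act N \<and> (\<forall>\<phi>\<in>End_R act. \<phi> ` N \<subseteq> N)"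

definition l_S :: "('m::ab_group_add \<Rightarrow> 'r::ring_1 \<Rightarrow> 'm) \<Rightarrow> 'm set \<Rightarrow> ('m \<Rightarrow> 'm) set" where
  "l_S act N = {\<phi> \<in> End_R act. \<forall>n\<in>N. \<phi> n = 0}"

definition add_subgroup_end :: "('m::ab_group_add \<Rightarrow> 'm) set \<Rightarrow> ('m \<Rightarrow> 'm) set \<Rightarrow> bool" where
  "add_subgroup_end S I \<longleftrightarrow> I \<subseteq> S \<and> zero_end \<in> I \<and> (\<forall>a\<in>I. \<forall>b\<in>I. add_end a b \<in> I)
      \<and> (\<forall>a\<in>I. neg_end a \<in> I)"

definition right_ideal_end :: "('m::ab_group_add \<Rightarrow> 'm) set \<Rightarrow> ('m \<Rightarrow> 'm) set \<Rightarrow> bool" where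
  "right_ideal_end S I \<longleftrightarrow> add_subgroup_end S I \<and> (\<forall>a\<in>I. \<forall>s\<in>S. a \<circ> s \<in> I)"

definition ideal_end :: "('m::ab_group_add \<Rightarrow> 'm) set \<Rightarrow> ('m \<Rightarrow> 'm) set \<Rightarrow> bool" where
  "ideal_end S I \<longleftrightarrow> right_ideal_end S I \<and> (\<forall>a\<in>I. \<forall>s\<in>S. s \<circ> a \<in> I)"

definition central_in :: "('m \<Rightarrow> 'm) set \<Rightarrow> ('m \<Rightarrow> 'm) \<Rightarrow> bool" where
  "central_in S z \<longleftrightarrow> z \<in> S \<and> (\<forall>s\<in>S. z \<circ> s = s \<circ> z)"

definition centrally_s_unital :: "('m::ab_group_add \<Rightarrow> 'm) set \<Rightarrow> ('m \<Rightarrow> 'm) set \<Rightarrow> bool" where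
  "centrally_s_unital S I \<longleftrightarrow> ideal_end S I \<and>
     (\<forall>a\<in>I. \<exists>z\<in>I. central_in S z \<and> a \<circ> z = a)"

definition centrally_endo_AIP :: "('m::ab_group_add \<Rightarrow> 'r::ring_1 \<Rightarrow> 'm) \<Rightarrow> bool" where
  "centrally_endo_AIP act \<longleftrightarrow>
     (\<forall>N. fully_invariant act N \<longrightarrow> centrally_s_unital (End_R act) (l_S act N))"

definition udim_one_right :: "('m::ab_group_add \<Rightarrow> 'm) set \<Rightarrow> bool" where
  "udim_one_right S \<longleftrightarrow> S \<noteq> {zero_end} \<and>
     (\<forall>I J. right_ideal_end S I \<longrightarrow> right_ideal_end S J \<longrightarrow> I \<noteq> {zero_end} \<longrightarrow> J \<noteq> {zero_end}
        \<longrightarrow> I \<inter> J \<noteq> {zero_end})"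

definition prime_ring_end :: "('m::ab_group_add \<Rightarrow> 'm) set \<Rightarrow> bool" where
  "prime_ring_end S \<longleftrightarrow> S \<noteq> {zero_end} \<and>
     (\<forall>a\<in>S. \<forall>b\<in>S. (\<forall>s\<in>S. a \<circ> s \<circ> b = zero_end) \<longrightarrow> a = zero_end \<or> b = zero_end)"

end

theory Submission
  imports Defs
begin

text \<open>Suppose \<open>a S b = 0\<close> with \<open>a, b \<noteq> 0\<close>. The submodule \<open>N = {m. a S m = 0}\<close> is fully invariant,
  \<open>a \<in> l_S(N)\<close> and \<open>b M \<subseteq> N\<close>. Central s-unitality of \<open>l_S(N)\<close> yields a central \<open>z \<in> l_S(N)\<close>
  with \<open>z a = a z = a\<close> and \<open>z b = 0\<close>. The right ideals \<open>{s. z s = s}\<close> and \<open>{s. z s = 0}\<close> then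
  contain \<open>a\<close> and \<open>b\<close> respectively and meet only in \<open>0\<close>, contradicting uniformity of \<open>S\<^sub>S\<close>.\<close>

lemma End_R_zero: "f \<in> End_R act \<Longrightarrow> f 0 = 0"
  unfolding End_R_def by (metis (mono_tags, lifting) add_cancel_right_right mem_Collect_eq)

lemma End_R_add: "f \<in> End_R act \<Longrightarrow> f (x + y) = f x + f y"
  unfolding End_R_def by auto

lemma End_R_act: "f \<in> End_R act \<Longrightarrow> f (act x r) = act (f x) r"
  unfolding End_R_def by auto

lemma End_R_neg: "f \<in> End_R act \<Longrightarrow> f (- x) = - f x"
  by (metis add.right_inverse End_R_add End_R_zero neg_eq_iff_add_eq_0)

lemma End_R_comp: "f \<in> End_R act \<Longrightarrow> g \<in> End_R act \<Longrightarrow> f \<circ> g \<in> End_R act"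
  unfolding End_R_def by auto

lemma id_in_End_R: "id \<in> End_R act"
  unfolding End_R_def by auto

lemma right_module_act_zero: "right_module act \<Longrightarrow> act 0 r = 0"
  unfolding right_module_def by (metis add_cancel_right_right add_0)

lemma right_module_act_neg: "right_module act \<Longrightarrow> act (- x) r = - act x r"
  unfolding right_module_def by (metis add.right_inverse add_cancel_right_right neg_eq_iff_add_eq_0)

lemma zero_end_in_End_R: "right_module act \<Longrightarrow> zero_end \<in> End_R act"
  unfolding End_R_def zero_end_def by (simp add: right_module_act_zero)

lemma add_end_in_End_R:
  "right_module act \<Longrightarrow> f \<in> End_R act \<Longrightarrow> g \<in> End_R act \<Longrightarrow> add_end f g \<in> End_R act"
  unfolding End_R_def add_end_def right_module_def by (simp add: algebra_simps)

lemma neg_end_in_End_R: "right_module act \<Longrightarrow> f \<in> End_R act \<Longrightarrow> neg_end f \<in> End_R act"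
  unfolding End_R_def neg_end_def by (simp add: right_module_act_neg)

lemma zero_end_comp: "zero_end \<circ> f = zero_end"
  by (simp add: zero_end_def comp_def)

lemma comp_zero_end: "f \<in> End_R act \<Longrightarrow> f \<circ> zero_end = zero_end"
  by (simp add: zero_end_def comp_def End_R_zero)

lemma right_ideal_end_equalizer:
  assumes "right_module act" and z: "z \<in> End_R act" and w: "w \<in> End_R act"
  shows "right_ideal_end (End_R act) {s \<in> End_R act. z \<circ> s = w \<circ> s}"
  unfolding right_ideal_end_def add_subgroup_end_def
proof (intro conjI ballI)
  show "zero_end \<in> {s \<in> End_R act. z \<circ> s = w \<circ> s}"
    using zero_end_in_End_R[OF assms(1)] z w by (simp add: comp_zero_end)
next
  fix f g assume f: "f \<in> {s \<in> End_R act. z \<circ> s = w \<circ> s}" and g: "g \<in> {s \<in> End_R act. z \<circ> s = w \<circ> s}"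
  have "z (f m + g m) = w (f m + g m)" for m
    using f g z w by (simp add: End_R_add) (metis comp_apply)
  then have "z \<circ> add_end f g = w \<circ> add_end f g"
    by (simp add: add_end_def comp_def)
  then show "add_end f g \<in> {s \<in> End_R act. z \<circ> s = w \<circ> s}"
    using f g assms(1) by (simp add: add_end_in_End_R)
next
  fix f assume f: "f \<in> {s \<in> End_R act. z \<circ> s = w \<circ> s}"
  have "z (- f m) = w (- f m)" for m
    using f z w by (simp add: End_R_neg) (metis comp_apply)
  then have "z \<circ> neg_end f = w \<circ> neg_end f"
    by (simp add: neg_end_def comp_def)
  then show "neg_end f \<in> {s \<in> End_R act. z \<circ> s = w \<circ> s}"
    using f assms(1) by (simp add: neg_end_in_End_R)
next
  fix f s assume "f \<in> {s \<in> End_R act. z \<circ> s = w \<circ> s}" and "s \<in> End_R act"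
  then show "f \<circ> s \<in> {s \<in> End_R act. z \<circ> s = w \<circ> s}"
    by (auto simp: End_R_comp comp_assoc[symmetric])
qed auto

lemma fully_invariant_common_kernel:
  assumes "right_module act" and T: "T \<subseteq> End_R act"
    and T_comp: "\<forall>t\<in>T. \<forall>s\<in>End_R act. t \<circ> s \<in> T"
  shows "fully_invariant act {m. \<forall>t\<in>T. t m = 0}"
  unfolding fully_invariant_def submodule_def
proof (intro conjI ballI allI subsetI)
  fix \<phi> y assume \<phi>: "\<phi> \<in> End_R act" and "y \<in> \<phi> ` {m. \<forall>t\<in>T. t m = 0}"
  then obtain x where x: "\<forall>t\<in>T. t x = 0" and y: "y = \<phi> x"
    by blast
  have "t (\<phi> x) = 0" if "t \<in> T" for t
    using x T_comp \<phi> that by (metis comp_apply)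
  then show "y \<in> {m. \<forall>t\<in>T. t m = 0}"
    using y by blast
next
  show "0 \<in> {m. \<forall>t\<in>T. t m = 0}" by (auto simp: End_R_zero[OF subsetD[OF T]])
next
  fix x y assume "x \<in> {m. \<forall>t\<in>T. t m = 0}" "y \<in> {m. \<forall>t\<in>T. t m = 0}"
  then show "x + y \<in> {m. \<forall>t\<in>T. t m = 0}" by (auto simp: End_R_add[OF subsetD[OF T]])
next
  fix x assume "x \<in> {m. \<forall>t\<in>T. t m = 0}"
  then show "- x \<in> {m. \<forall>t\<in>T. t m = 0}" by (auto simp: End_R_neg[OF subsetD[OF T]])
next
  fix x r assume "x \<in> {m. \<forall>t\<in>T. t m = 0}"
  then show "act x r \<in> {m. \<forall>t\<in>T. t m = 0}"
    by (auto simp: End_R_act[OF subsetD[OF T]] right_module_act_zero[OF assms(1)])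
qed

lemma centrally_endo_AIP_central_separator:
  assumes "right_module act" and "centrally_endo_AIP act"
    and a: "a \<in> End_R act" and b: "b \<in> End_R act"
    and aSb: "\<forall>s\<in>End_R act. a \<circ> s \<circ> b = zero_end"
  shows "\<exists>z. central_in (End_R act) z \<and> z \<circ> a = a \<and> z \<circ> b = zero_end"
proof -
  define N where "N = {m. \<forall>t\<in>(\<lambda>s. a \<circ> s) ` End_R act. t m = 0}"
  have "fully_invariant act N"
    unfolding N_def using assms(1) a
    by (intro fully_invariant_common_kernel) (auto simp: comp_assoc End_R_comp intro!: imageI)
  then have unital: "centrally_s_unital (End_R act) (l_S act N)"
    using assms(2) unfolding centrally_endo_AIP_def by blast
  have "a \<in> l_S act N"
    using a id_in_End_R[of act] unfolding l_S_def N_def by fastforce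
  with unital obtain z where z_ann: "z \<in> l_S act N" and central: "central_in (End_R act) z"
    and "a \<circ> z = a"
    unfolding centrally_s_unital_def by blast
  then have "z \<circ> a = a"
    using a unfolding central_in_def by metis
  moreover have "b m \<in> N" for m
  proof -
    have "a (s (b m)) = 0" if "s \<in> End_R act" for s
      using fun_cong[OF bspec[OF aSb that], of m] by (simp add: zero_end_def)
    then show ?thesis
      unfolding N_def by auto
  qed
  then have "z \<circ> b = zero_end"
    using z_ann unfolding l_S_def zero_end_def by auto
  ultimately show ?thesis
    using central by blast
qed

lemma udim_one_right_no_separator:
  assumes "right_module act" and "udim_one_right (End_R act)"
    and z: "z \<in> End_R act" and a: "a \<in> End_R act" and b: "b \<in> End_R act"
    and "z \<circ> a = a" and "z \<circ> b = zero_end"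
  shows "a = zero_end \<or> b = zero_end"
proof -
  define I where "I = {s \<in> End_R act. z \<circ> s = id \<circ> s}"
  define J where "J = {s \<in> End_R act. z \<circ> s = zero_end \<circ> s}"
  have "right_ideal_end (End_R act) I" "right_ideal_end (End_R act) J"
    unfolding I_def J_def
    using assms(1) z id_in_End_R zero_end_in_End_R[OF assms(1)]
    by (blast intro: right_ideal_end_equalizer)+
  moreover have "I \<inter> J = {zero_end}"
    using z zero_end_in_End_R[OF assms(1)]
    unfolding I_def J_def by (auto simp: zero_end_comp comp_zero_end)
  moreover have "a \<in> I" "b \<in> J"
    using assms unfolding I_def J_def by (simp_all add: zero_end_comp)
  ultimately show ?thesis
    using assms(2) unfolding udim_one_right_def by blast
qed

theorem corollary3p8:
  fixes act :: "'m::ab_group_add \<Rightarrow> 'r::ring_1 \<Rightarrow> 'm"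
  assumes "right_module act"
    and "centrally_endo_AIP act"
    and "udim_one_right (End_R act)"
  shows "prime_ring_end (End_R act)"
  unfolding prime_ring_end_def
proof (intro conjI ballI impI)
  show "End_R act \<noteq> {zero_end}"
    using assms(3) unfolding udim_one_right_def by blast
next
  fix a b assume "a \<in> End_R act" "b \<in> End_R act" "\<forall>s\<in>End_R act. a \<circ> s \<circ> b = zero_end"
  with assms(1,2) obtain z where "central_in (End_R act) z" "z \<circ> a = a" "z \<circ> b = zero_end"
    using centrally_endo_AIP_central_separator by blast
  with assms(1,3) \<open>a \<in> End_R act\<close> \<open>b \<in> End_R act\<close> show "a = zero_end \<or> b = zero_end"
    using udim_one_right_no_separator unfolding central_in_def by blast
qed

end
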